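(* Let $\mu,\nu$ be symmetric Lévy measures on $\mathbb{R}^m\setminus\{0\}$ and $\mathbb{R}^n\setminus\{0\}$, each with full support, and let $X,Y$ be random vectors in $\mathbb{R}^m$ and $\mathbb{R}^n$. Then $X$ and $Y$ are independent if and only if $V^2(X,Y)=0$.
   Context: Symmetric Lévy measure on $\mathbb{R}^d\setminus\{0\}$: $\rho(B)=\rho(-B)$ and $\int(1\wedge|r|^2)\rho(dr)<\infty$; full support: positive mass on every nonempty open subset of $\mathbb{R}^d\setminus\{0\}$. Generalized distance covariance: $V^2(X,Y)=\iint|f_{(X,Y)}(s,t)-f_X(s)f_Y(t)|^2\,\mu(ds)\,\nu(dt)\in[0,\infty]$, where $f$ denotes characteristic functions. *)

theory Defs
  imports "HOL-Probability.Probability"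
begin

text \<open>Symmetric Levy measure on R^d minus the origin, represented as a Borel measure on
  the whole space giving no mass to the origin.\<close>
definition levy_measure :: "'a::euclidean_space measure \<Rightarrow> bool" where
  "levy_measure \<rho> \<longleftrightarrow> sets \<rho> = sets borel \<and> emeasure \<rho> {0} = 0 \<and>
     (\<integral>\<^sup>+ r. ennreal (min 1 (norm r ^ 2)) \<partial>\<rho>) < \<infinity>"

definition symmetric_measure :: "'a::euclidean_space measure \<Rightarrow> bool" where
  "symmetric_measure \<rho> \<longleftrightarrow> (\<forall>B\<in>sets borel. emeasure \<rho> B = emeasure \<rho> (uminus ` B))"

definition full_support :: "'a::euclidean_space measure \<Rightarrow> bool" where
  "full_support \<rho> \<longleftrightarrow> (\<forall>U. open U \<and> U \<noteq> {} \<and> 0 \<notin> U \<longrightarrow> emeasure \<rho> U > 0)"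

definition charf :: "'w measure \<Rightarrow> ('w \<Rightarrow> 'a::euclidean_space) \<Rightarrow> 'a \<Rightarrow> complex" where
  "charf M X s = (CLINT \<omega>|M. cis (s \<bullet> X \<omega>))"

definition charf2 :: "'w measure \<Rightarrow> ('w \<Rightarrow> 'a::euclidean_space) \<Rightarrow> ('w \<Rightarrow> 'b::euclidean_space)
    \<Rightarrow> 'a \<Rightarrow> 'b \<Rightarrow> complex" where
  "charf2 M X Y s t = (CLINT \<omega>|M. cis (s \<bullet> X \<omega> + t \<bullet> Y \<omega>))"

definition dcov2 :: "'a::euclidean_space measure \<Rightarrow> 'b::euclidean_space measure \<Rightarrow> 'w measure
    \<Rightarrow> ('w \<Rightarrow> 'a) \<Rightarrow> ('w \<Rightarrow> 'b) \<Rightarrow> ennreal" where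
  "dcov2 \<mu> \<nu> M X Y = (\<integral>\<^sup>+ st. ennreal ((cmod (charf2 M X Y (fst st) (snd st)
       - charf M X (fst st) * charf M Y (snd st)))\<^sup>2) \<partial>(\<mu> \<Otimes>\<^sub>M \<nu>))"

end

theory Submission
  imports Defs
begin

text \<open>X and Y are independent iff the joint characteristic function factorizes, i.e. iff the
  continuous function D(s, t) = f_(X,Y)(s, t) - f_X(s) f_Y(t) vanishes identically. V^2(X, Y) is
  the integral of |D|^2 against mu x nu, which charges every product of open sets avoiding the
  origin; so V^2 = 0 forces D to vanish off the coordinate axes by continuity, while on the axes
  D vanishes because characteristic functions equal 1 at 0.

  The first step rests on the uniqueness theorem for multivariate characteristic functions, shown
  with Stone-Weierstrass: composing with x \<mapsto> (cos (pi (x_b - t_b) / L))_b turns polynomials into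
  trigonometric polynomials, and turns boxes centred at t into preimages of orthants up to the
  region |x - t| > L, whose mass vanishes as L \<rightarrow> \<infinity>.\<close>

subsection \<open>Trigonometric polynomials\<close>

inductive trig_poly :: "('a::euclidean_space \<Rightarrow> complex) \<Rightarrow> bool" where
  trig_poly_cis: "trig_poly (\<lambda>x. c * cis (m \<bullet> x))"
| trig_poly_add: "trig_poly f \<Longrightarrow> trig_poly g \<Longrightarrow> trig_poly (\<lambda>x. f x + g x)"

lemma trig_poly_const: "trig_poly (\<lambda>x. c)"
  using trig_poly_cis[of c 0] by simp

lemma trig_poly_mult:
  assumes "trig_poly f" "trig_poly g"
  shows "trig_poly (\<lambda>x. f x * g x)"
  using assms
proof (induction f rule: trig_poly.induct)
  case (trig_poly_cis c m)
  from \<open>trig_poly g\<close> show ?case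
  proof (induction g rule: trig_poly.induct)
    case (trig_poly_cis d n)
    have "(\<lambda>x. c * cis (m \<bullet> x) * (d * cis (n \<bullet> x))) = (\<lambda>x. (c * d) * cis ((m + n) \<bullet> x))"
      by (auto simp: cis_mult[symmetric] inner_add_left algebra_simps)
    then show ?case by (metis trig_poly.trig_poly_cis)
  next
    case (trig_poly_add g1 g2)
    then show ?case by (simp add: distrib_left trig_poly.trig_poly_add)
  qed
next
  case (trig_poly_add f1 f2)
  then show ?case by (simp add: distrib_right trig_poly.trig_poly_add)
qed

lemma trig_poly_sum:
  "finite S \<Longrightarrow> (\<And>i. i \<in> S \<Longrightarrow> trig_poly (f i)) \<Longrightarrow> trig_poly (\<lambda>x. \<Sum>i\<in>S. f i x)"
  by (induction S rule: finite_induct) (auto intro: trig_poly_add trig_poly_const)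

lemma trig_poly_continuous: "trig_poly f \<Longrightarrow> continuous_on UNIV f"
  by (induction rule: trig_poly.induct) (auto intro!: continuous_intros)

lemma trig_poly_bounded: "trig_poly f \<Longrightarrow> \<exists>B. \<forall>x. norm (f x) \<le> B"
proof (induction rule: trig_poly.induct)
  case (trig_poly_cis c m)
  then show ?case by (auto simp: norm_mult)
next
  case (trig_poly_add f g)
  then obtain B1 B2 where "\<forall>x. norm (f x) \<le> B1" "\<forall>x. norm (g x) \<le> B2" by blast
  then show ?case by (metis add_mono norm_triangle_ineq order_trans)
qed

lemma integrable_bounded_continuous:
  fixes f :: "'a::euclidean_space \<Rightarrow> 'b::{banach, second_countable_topology}"
  assumes "finite_measure M" "sets M = sets borel" "continuous_on UNIV f" "\<And>x. norm (f x) \<le> B"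
  shows "integrable M f"
proof -
  interpret finite_measure M by fact
  have "f \<in> borel_measurable M"
    using borel_measurable_continuous_onI[OF assms(3)] measurable_cong_sets[OF assms(2) refl] by blast
  then show ?thesis using assms(4) by (intro integrable_const_bound[of _ B]) auto
qed

lemma integrable_trig_poly:
  assumes "finite_measure M" "sets M = sets borel" "trig_poly f"
  shows "integrable M f"
  using trig_poly_bounded[OF assms(3)]
    integrable_bounded_continuous[OF assms(1,2) trig_poly_continuous[OF assms(3)]]
  by blast

lemma (in prob_space) abs_integral_diff_le:
  fixes f g :: "'a \<Rightarrow> real"
  assumes "integrable M f" "integrable M g" "\<And>x. x \<in> space M \<Longrightarrow> \<bar>f x - g x\<bar> \<le> e"
  shows "\<bar>integral\<^sup>L M f - integral\<^sup>L M g\<bar> \<le> e"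
proof -
  have "\<bar>\<integral>x. f x - g x \<partial>M\<bar> \<le> (\<integral>x. \<bar>f x - g x\<bar> \<partial>M)"
    using integral_norm_bound[of M "\<lambda>x. f x - g x"] by simp
  also have "\<dots> \<le> e"
    using assms by (intro integral_le_const AE_I2) auto
  finally show ?thesis using assms(1,2) by simp
qed

subsection \<open>Uniqueness of characteristic functions\<close>

definition cos_coords :: "'a::euclidean_space \<Rightarrow> real \<Rightarrow> 'a \<Rightarrow> 'a" where
  "cos_coords t L x = (\<Sum>b\<in>Basis. cos (pi / L * (x \<bullet> b - t \<bullet> b)) *\<^sub>R b)"

lemma inner_cos_coords: "b \<in> Basis \<Longrightarrow> cos_coords t L x \<bullet> b = cos (pi / L * (x \<bullet> b - t \<bullet> b))"
  by (simp add: cos_coords_def inner_sum_left inner_Basis if_distrib sum.delta cong: if_cong)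

lemma cos_coords_in_cube: "cos_coords t L x \<in> cbox (- One) One"
  by (auto simp: mem_box inner_cos_coords)

lemma continuous_on_cos_coords: "continuous_on UNIV (cos_coords t L)"
  unfolding cos_coords_def by (intro continuous_intros)

lemma trig_poly_cos:
  fixes m :: "'a::euclidean_space"
  shows "trig_poly (\<lambda>x. complex_of_real (cos (m \<bullet> x + k)))"
proof -
  have "complex_of_real (cos (m \<bullet> x + k)) = (cis k / 2) * cis (m \<bullet> x) + (cis (-k) / 2) * cis ((-m) \<bullet> x)" for x
    by (simp add: complex_eq_iff cos_add field_simps)
  then show ?thesis by (simp only:) (intro trig_poly_add trig_poly_cis)
qed

lemma trig_poly_polynomial_cos_coords:
  "real_polynomial_function p \<Longrightarrow> trig_poly (\<lambda>x. complex_of_real (p (cos_coords t L x)))"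
proof (induction rule: real_polynomial_function.induct)
  case (linear f)
  then interpret bounded_linear f .
  have "pi / L * (x \<bullet> b - t \<bullet> b) = ((pi / L) *\<^sub>R b) \<bullet> x + - (pi / L * (t \<bullet> b))" for x b :: 'a
    by (simp add: algebra_simps inner_commute)
  then have "complex_of_real (f (cos_coords t L x)) =
      (\<Sum>b\<in>Basis. complex_of_real (cos (((pi / L) *\<^sub>R b) \<bullet> x + - (pi / L * (t \<bullet> b)))) * complex_of_real (f b))"
    for x by (simp add: cos_coords_def sum scale)
  then show ?case
    by (simp only:) (intro trig_poly_sum trig_poly_mult trig_poly_cos trig_poly_const finite_Basis)
qed (auto intro: trig_poly_const trig_poly_add trig_poly_mult)

definition orthant :: "('a::euclidean_space \<Rightarrow> real) \<Rightarrow> 'a set" where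
  "orthant \<theta> = {c. \<forall>b\<in>Basis. \<theta> b < c \<bullet> b}"

definition orthant_ramp :: "('a::euclidean_space \<Rightarrow> real) \<Rightarrow> nat \<Rightarrow> 'a \<Rightarrow> real" where
  "orthant_ramp \<theta> n c = (\<Prod>b\<in>Basis. max 0 (min 1 (real n * (c \<bullet> b - \<theta> b))))"

lemma open_orthant: "open (orthant \<theta>)"
proof -
  have "orthant \<theta> = (\<Inter>b\<in>Basis. {c. \<theta> b < c \<bullet> b})" by (auto simp: orthant_def)
  then show ?thesis by (auto intro!: open_INT open_Collect_less continuous_intros)
qed

lemma continuous_on_orthant_ramp: "continuous_on S (orthant_ramp \<theta> n)"
  unfolding orthant_ramp_def by (intro continuous_intros)

lemma abs_orthant_ramp_le_1: "\<bar>orthant_ramp \<theta> n c\<bar> \<le> 1"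
proof -
  have "0 \<le> orthant_ramp \<theta> n c" "orthant_ramp \<theta> n c \<le> 1"
    unfolding orthant_ramp_def by (auto intro!: prod_nonneg prod_le_1)
  then show ?thesis by simp
qed

lemma orthant_ramp_tendsto_indicator:
  "(\<lambda>n. orthant_ramp \<theta> n c) \<longlonglongrightarrow> indicator (orthant \<theta>) c"
proof (cases "c \<in> orthant \<theta>")
  case True
  have "\<forall>\<^sub>F n in sequentially. max 0 (min 1 (real n * (c \<bullet> b - \<theta> b))) = 1" if "b \<in> Basis" for b
  proof -
    have d: "0 < c \<bullet> b - \<theta> b" using True that by (auto simp: orthant_def)
    then obtain N :: nat where "1 / (c \<bullet> b - \<theta> b) < real N" using reals_Archimedean2 by blast
    with d have "1 \<le> real N * (c \<bullet> b - \<theta> b)" by (simp add: field_simps)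
    then have "1 \<le> real n * (c \<bullet> b - \<theta> b)" if "N \<le> n" for n
      using that d by (meson order_trans mult_right_mono of_nat_le_iff less_imp_le)
    then show ?thesis by (auto intro: eventually_sequentiallyI[of N])
  qed
  then have "\<forall>\<^sub>F n in sequentially. \<forall>b\<in>Basis. max 0 (min 1 (real n * (c \<bullet> b - \<theta> b))) = 1"
    by (intro eventually_ball_finite) auto
  then have "\<forall>\<^sub>F n in sequentially. orthant_ramp \<theta> n c = 1"
    by eventually_elim (simp add: orthant_ramp_def)
  then show ?thesis using True by (simp add: tendsto_eventually)
next
  case False
  then obtain b where b: "b \<in> Basis" "c \<bullet> b \<le> \<theta> b" by (auto simp: orthant_def not_less)
  then have "max 0 (min 1 (real n * (c \<bullet> b - \<theta> b))) = 0" for n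
    using mult_nonneg_nonpos[of "real n" "c \<bullet> b - \<theta> b"] by simp
  then have "orthant_ramp \<theta> n c = 0" for n
    unfolding orthant_ramp_def using b(1) by (intro prod_zero) auto
  then show ?thesis using False by simp
qed

lemma cos_scaled_less_iff:
  fixes L a y :: real
  assumes "0 < L" "0 \<le> a" "a \<le> L" "\<bar>y\<bar> \<le> L"
  shows "cos (pi / L * a) < cos (pi / L * y) \<longleftrightarrow> \<bar>y\<bar> < a"
proof -
  have "cos (pi / L * y) = cos (pi / L * \<bar>y\<bar>)"
    using assms(1) by (metis abs_mult abs_of_pos cos_abs_real divide_pos_pos pi_gt_zero)
  then have "cos (pi / L * a) < cos (pi / L * y) \<longleftrightarrow> pi / L * \<bar>y\<bar> < pi / L * a"
    using assms by (simp only:) (intro cos_mono_less_eq, auto simp: field_simps)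
  also have "\<dots> \<longleftrightarrow> \<bar>y\<bar> < a"
    using assms(1) mult_less_cancel_left_pos[of "pi / L"] by simp
  finally show ?thesis .
qed

lemma cos_coords_in_orthant_iff:
  fixes a t x :: "'a::euclidean_space"
  assumes "0 < L" and a: "\<And>b. b \<in> Basis \<Longrightarrow> 0 < a \<bullet> b \<and> a \<bullet> b \<le> L"
    and x: "\<And>b. b \<in> Basis \<Longrightarrow> \<bar>x \<bullet> b - t \<bullet> b\<bar> \<le> L"
  shows "cos_coords t L x \<in> orthant (\<lambda>b. cos (pi / L * (a \<bullet> b))) \<longleftrightarrow> x \<in> box (t - a) (t + a)"
proof -
  have "x \<in> box (t - a) (t + a) \<longleftrightarrow> (\<forall>b\<in>Basis. \<bar>x \<bullet> b - t \<bullet> b\<bar> < a \<bullet> b)"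
    by (auto simp: mem_box inner_diff_left inner_add_left abs_less_iff)
  then show ?thesis
    using cos_scaled_less_iff[OF \<open>0 < L\<close>] a x by (auto simp: orthant_def inner_cos_coords less_imp_le)
qed

lemma tendsto_measure_norm_gt:
  fixes t :: "'a::real_normed_vector"
  assumes "finite_measure M" "sets M = sets borel"
  shows "(\<lambda>n. measure M {x. real n < norm (x - t)}) \<longlonglongrightarrow> 0"
proof -
  interpret finite_measure M by fact
  have "{x. real n < norm (x - t)} \<in> sets M" for n
    unfolding assms(2) by (intro borel_open open_Collect_less continuous_intros)
  moreover have "decseq (\<lambda>n. {x. real n < norm (x - t)})"
    by (intro decseq_SucI) auto
  ultimately have "(\<lambda>n. measure M {x. real n < norm (x - t)}) \<longlonglongrightarrow> measure M (\<Inter>n. {x. real n < norm (x - t)})"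
    by (intro finite_Lim_measure_decseq) auto
  moreover have "\<exists>n. \<not> real n < norm (x - t)" for x
    using reals_Archimedean2[of "norm (x - t)"] less_asym by blast
  then have "(\<Inter>n. {x. real n < norm (x - t)}) = {}" by blast
  ultimately show ?thesis by simp
qed

lemma UN_box_One_eq_UNIV:
  "(\<Union>n::nat. box (- real n *\<^sub>R One) (real n *\<^sub>R One)) = (UNIV :: 'a::euclidean_space set)"
proof (rule sym, rule UNIV_eq_I)
  fix x :: 'a
  obtain n :: nat where "norm x < real n"
    using reals_Archimedean2 by blast
  then have "- real n < x \<bullet> i \<and> x \<bullet> i < real n" if "i \<in> Basis" for i
    using Basis_le_norm[OF that, of x] abs_le_iff[of "x \<bullet> i" "norm x"] by linarith
  then have "x \<in> box (- real n *\<^sub>R One) (real n *\<^sub>R One)"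
    by (simp add: mem_box)
  then show "x \<in> (\<Union>n::nat. box (- real n *\<^sub>R One) (real n *\<^sub>R One))"
    by blast
qed

locale same_char = P: prob_space P + Q: prob_space Q
  for P Q :: "'a::euclidean_space measure" +
  assumes sets_P: "sets P = sets borel" and sets_Q: "sets Q = sets borel"
    and char_eq: "\<And>m. (CLINT x|P. cis (m \<bullet> x)) = (CLINT x|Q. cis (m \<bullet> x))"
begin

lemma same_char_swap: "same_char Q P"
  by unfold_locales (use char_eq sets_P sets_Q in auto)

lemma integral_trig_poly_eq: "trig_poly f \<Longrightarrow> integral\<^sup>L P f = integral\<^sup>L Q f"
proof (induction rule: trig_poly.induct)
  case (trig_poly_cis c m)
  then show ?case using char_eq[of m] by simp
next
  case (trig_poly_add f g)
  then show ?case
    using integrable_trig_poly[OF P.finite_measure_axioms sets_P]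
      integrable_trig_poly[OF Q.finite_measure_axioms sets_Q] by simp
qed

lemma integral_continuous_cos_coords_eq:
  fixes G :: "'a \<Rightarrow> real"
  assumes G: "continuous_on (cbox (- One) One) G"
  shows "(\<integral>x. G (cos_coords t L x) \<partial>P) = (\<integral>x. G (cos_coords t L x) \<partial>Q)"
proof -
  let ?C = "cos_coords t L" and ?S = "cbox (- One) (One::'a)"
  obtain B where B: "\<And>c. c \<in> ?S \<Longrightarrow> \<bar>G c\<bar> \<le> B"
    using compact_imp_bounded[OF compact_continuous_image[OF G compact_cbox]]
    unfolding bounded_iff by auto
  have integrable: "integrable M (\<lambda>x. F (?C x))"
    if "finite_measure M" "sets M = sets borel" "continuous_on ?S F" "\<And>c. c \<in> ?S \<Longrightarrow> \<bar>F c\<bar> \<le> K"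
    for M and F :: "'a \<Rightarrow> real" and K
  proof -
    have "continuous_on UNIV (\<lambda>x. F (?C x))"
      by (rule continuous_on_compose2[OF that(3) continuous_on_cos_coords]) (auto simp: cos_coords_in_cube)
    then show ?thesis
      using that(4) cos_coords_in_cube by (intro integrable_bounded_continuous[OF that(1,2)]) auto
  qed
  have approx: "\<bar>(\<integral>x. G (?C x) \<partial>P) - (\<integral>x. G (?C x) \<partial>Q)\<bar> \<le> 2 * e" if "e > 0" for e
  proof -
    obtain g where g: "polynomial_function g" "\<And>c. c \<in> ?S \<Longrightarrow> \<bar>G c - g c\<bar> < e"
      using Stone_Weierstrass_polynomial_function[OF compact_cbox G \<open>e > 0\<close>] by auto
    have cg: "continuous_on ?S g" using continuous_on_polymonial_function[OF g(1)] .
    have gB: "\<bar>g c\<bar> \<le> B + e" if "c \<in> ?S" for c using B[OF that] g(2)[OF that] by linarith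
    have close: "\<bar>G (?C x) - g (?C x)\<bar> \<le> e" for x
      using g(2)[OF cos_coords_in_cube[of t L x]] by linarith
    have "complex_of_real (\<integral>x. g (?C x) \<partial>P) = complex_of_real (\<integral>x. g (?C x) \<partial>Q)"
      using integral_trig_poly_eq[OF trig_poly_polynomial_cos_coords[of g t L]] g(1)
      by (simp add: real_polynomial_function_eq)
    then have "(\<integral>x. g (?C x) \<partial>P) = (\<integral>x. g (?C x) \<partial>Q)" by simp
    moreover have close_integral: "\<bar>(\<integral>x. G (?C x) \<partial>M) - (\<integral>x. g (?C x) \<partial>M)\<bar> \<le> e"
      if "prob_space M" "sets M = sets borel" for M
    proof -
      interpret prob_space M by fact
      show ?thesis
        by (intro abs_integral_diff_le close integrable[OF finite_measure_axioms that(2) G B]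
            integrable[OF finite_measure_axioms that(2) cg gB])
    qed
    ultimately show ?thesis
      using close_integral[OF P.prob_space_axioms sets_P] close_integral[OF Q.prob_space_axioms sets_Q]
      by linarith
  qed
  have "\<bar>(\<integral>x. G (?C x) \<partial>P) - (\<integral>x. G (?C x) \<partial>Q)\<bar> \<le> 0 + e" if "e > 0" for e
    using approx[of "e / 2"] that by simp
  then have "\<bar>(\<integral>x. G (?C x) \<partial>P) - (\<integral>x. G (?C x) \<partial>Q)\<bar> \<le> 0"
    by (rule field_le_epsilon)
  then show ?thesis by simp
qed

lemma measure_cos_coords_orthant_eq:
  "measure P (cos_coords t L -` orthant \<theta>) = measure Q (cos_coords t L -` orthant \<theta>)"
proof -
  let ?C = "cos_coords t L"
  have indicator_eq: "(\<lambda>x. indicator (orthant \<theta>) (?C x)) = (indicator (?C -` orthant \<theta>) :: 'a \<Rightarrow> real)"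
    by (rule ext) (simp add: indicator_def)
  have vimage_borel: "?C -` orthant \<theta> \<in> sets borel"
    by (intro borel_open open_vimage open_orthant continuous_on_cos_coords)
  have ramp_borel: "(\<lambda>x. orthant_ramp \<theta> n (?C x)) \<in> borel_measurable borel" for n
    using borel_measurable_continuous_onI[OF continuous_on_compose[OF continuous_on_cos_coords
        continuous_on_orthant_ramp]] by (simp add: o_def)
  have ramp_limit: "(\<lambda>n. \<integral>x. orthant_ramp \<theta> n (?C x) \<partial>M) \<longlonglongrightarrow> measure M (?C -` orthant \<theta>)"
    if "prob_space M" "sets M = sets borel" for M
  proof -
    interpret prob_space M by fact
    have "(\<lambda>n. \<integral>x. orthant_ramp \<theta> n (?C x) \<partial>M) \<longlonglongrightarrow> (\<integral>x. indicator (orthant \<theta>) (?C x) \<partial>M)"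
    proof (rule integral_dominated_convergence[where w="\<lambda>_. 1"])
      show "(\<lambda>x. indicator (orthant \<theta>) (?C x) :: real) \<in> borel_measurable M"
        unfolding indicator_eq measurable_cong_sets[OF that(2) refl] using vimage_borel by simp
      show "(\<lambda>x. orthant_ramp \<theta> n (?C x)) \<in> borel_measurable M" for n
        unfolding measurable_cong_sets[OF that(2) refl] by (rule ramp_borel)
    qed (simp_all add: abs_orthant_ramp_le_1 orthant_ramp_tendsto_indicator)
    then show ?thesis
      unfolding indicator_eq using sets_eq_imp_space_eq[OF that(2)] by simp
  qed
  have "(\<integral>x. orthant_ramp \<theta> n (?C x) \<partial>P) = (\<integral>x. orthant_ramp \<theta> n (?C x) \<partial>Q)" for n
    by (rule integral_continuous_cos_coords_eq[OF continuous_on_orthant_ramp])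
  then have "(\<lambda>n. \<integral>x. orthant_ramp \<theta> n (?C x) \<partial>P) \<longlonglongrightarrow> measure Q (?C -` orthant \<theta>)"
    using ramp_limit[OF Q.prob_space_axioms sets_Q] by simp
  then show ?thesis
    using ramp_limit[OF P.prob_space_axioms sets_P] by (rule LIMSEQ_unique[rotated])
qed

lemma measure_box_le:
  assumes a: "\<And>b. b \<in> Basis \<Longrightarrow> 0 < a \<bullet> b"
  shows "measure P (box (t - a) (t + a)) \<le> measure Q (box (t - a) (t + a))"
proof -
  let ?B = "box (t - a) (t + a)" and ?T = "\<lambda>n. {x. real n < norm (x - t)}"
  obtain N :: nat where N: "(\<Sum>b\<in>Basis. a \<bullet> b) < real N"
    using reals_Archimedean2 by blast
  have a_le_N: "0 < a \<bullet> b \<and> a \<bullet> b \<le> real N" if "b \<in> Basis" for b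
    using a that N member_le_sum[of b Basis "\<lambda>b. a \<bullet> b"] by (auto simp: less_imp_le)
  have "measure P ?B \<le> measure Q ?B + measure Q (?T n)" if "N \<le> n" for n
  proof -
    let ?E = "cos_coords t (real n) -` orthant (\<lambda>b. cos (pi / real n * (a \<bullet> b)))"
    have L: "\<And>b. b \<in> Basis \<Longrightarrow> 0 < a \<bullet> b \<and> a \<bullet> b \<le> real n"
      using a_le_N that by (meson of_nat_le_iff order_trans)
    then have "0 < real n"
      using SOME_Basis by fastforce
    note orthant_iff = cos_coords_in_orthant_iff[OF \<open>0 < real n\<close> L]
    have "?B \<subseteq> ?E"
    proof
      fix x assume x: "x \<in> ?B"
      then have "\<bar>x \<bullet> b - t \<bullet> b\<bar> \<le> real n" if "b \<in> Basis" for b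
        using L[OF that] that by (auto simp: mem_box inner_diff_left inner_add_left abs_le_iff)
      then show "x \<in> ?E" using orthant_iff x by blast
    qed
    moreover have "?E \<subseteq> ?B \<union> ?T n"
    proof
      fix x assume x: "x \<in> ?E"
      show "x \<in> ?B \<union> ?T n"
      proof (cases "x \<in> ?T n")
        case False
        then have "\<bar>x \<bullet> b - t \<bullet> b\<bar> \<le> real n" if "b \<in> Basis" for b
          using Basis_le_norm[OF that, of "x - t"] by (simp add: inner_diff_left)
        then show ?thesis using orthant_iff x by blast
      qed simp
    qed
    moreover have "?E \<in> sets borel" "?T n \<in> sets borel"
      by (intro borel_open open_vimage open_orthant continuous_on_cos_coords open_Collect_less
          continuous_intros)+
    ultimately have "measure P ?B \<le> measure P ?E" "measure Q ?E \<le> measure Q (?B \<union> ?T n)"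
      using sets_P sets_Q by (simp_all add: P.finite_measure_mono Q.finite_measure_mono)
    moreover have "measure Q (?B \<union> ?T n) \<le> measure Q ?B + measure Q (?T n)"
      using sets_Q \<open>?T n \<in> sets borel\<close> by (intro measure_Un_le) simp_all
    ultimately show ?thesis using measure_cos_coords_orthant_eq by simp
  qed
  then have "\<forall>\<^sub>F n in sequentially. measure P ?B \<le> measure Q ?B + measure Q (?T n)"
    by (rule eventually_sequentiallyI)
  moreover have "(\<lambda>n. measure Q ?B + measure Q (?T n)) \<longlonglongrightarrow> measure Q ?B + 0"
    by (intro tendsto_add tendsto_const tendsto_measure_norm_gt Q.finite_measure_axioms sets_Q)
  ultimately show ?thesis
    using tendsto_le[OF trivial_limit_sequentially _ tendsto_const] by fastforce
qed

lemma emeasure_box_eq: "emeasure P (box l u) = emeasure Q (box l u)"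
proof (cases "\<forall>b\<in>Basis. l \<bullet> b < u \<bullet> b")
  case True
  define t where "t = (1/2) *\<^sub>R (l + u)"
  define a where "a = (1/2) *\<^sub>R (u - l)"
  have box_eq: "box (t - a) (t + a) = box l u"
    unfolding t_def a_def by (simp add: algebra_simps flip: scaleR_2)
  have a: "0 < a \<bullet> b" if "b \<in> Basis" for b
    using True that unfolding a_def by (simp add: inner_diff_left)
  have "measure P (box (t - a) (t + a)) \<le> measure Q (box (t - a) (t + a))"
    by (rule measure_box_le) (rule a)
  moreover have "measure Q (box (t - a) (t + a)) \<le> measure P (box (t - a) (t + a))"
    by (rule same_char.measure_box_le[OF same_char_swap]) (rule a)
  ultimately show ?thesis
    unfolding box_eq using sets_P sets_Q by (simp add: P.emeasure_eq_measure Q.emeasure_eq_measure)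
next
  case False
  then have "box l u = {}" by (simp add: box_eq_empty not_less)
  then show ?thesis by simp
qed

theorem measure_eq: "P = Q"
proof (rule measure_eqI_generator_eq_countable[where E="range (\<lambda>(l, u). box l u)" and \<Omega>=UNIV
      and A="range (\<lambda>n. box (- real n *\<^sub>R One) (real n *\<^sub>R One))"])
  show "sets P = sigma_sets UNIV (range (\<lambda>(l, u). box l u))"
    "sets Q = sigma_sets UNIV (range (\<lambda>(l, u). box l u))"
    using sets_P sets_Q by (simp_all add: borel_eq_box sets_measure_of)
  show "Int_stable (range (\<lambda>(l, u). box l u :: 'a set))"
    by (auto simp: Int_stable_def box_Int_box)
  show "range (\<lambda>(l, u). box l u) \<subseteq> Pow (UNIV :: 'a set)"
    by simp
  show "emeasure P X = emeasure Q X" if "X \<in> range (\<lambda>(l, u). box l u)" for X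
    using that emeasure_box_eq by (auto simp: image_iff split: prod.splits)
  show "range (\<lambda>n. box (- real n *\<^sub>R One) (real n *\<^sub>R One)) \<subseteq> range (\<lambda>(l, u). box l u :: 'a set)"
  proof (intro image_subsetI)
    fix n :: nat
    show "box (- real n *\<^sub>R One) (real n *\<^sub>R One) \<in> range (\<lambda>(l, u). box l u :: 'a set)"
      using rangeI[of "\<lambda>(l, u). box l u" "(- real n *\<^sub>R One, real n *\<^sub>R One) :: 'a \<times> 'a"] by simp
  qed
  show "\<Union> (range (\<lambda>n. box (- real n *\<^sub>R One) (real n *\<^sub>R One))) = (UNIV :: 'a set)"
    by (rule UN_box_One_eq_UNIV)
  show "countable (range (\<lambda>n. box (- real n *\<^sub>R One) (real n *\<^sub>R One) :: 'a set))"
    by simp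
  show "emeasure P X \<noteq> \<infinity>" for X
    by (simp add: P.emeasure_eq_measure)
qed

end

subsection \<open>Independence and distance covariance\<close>

lemma levy_measure_sigma_finite:
  fixes \<rho> :: "'a::euclidean_space measure"
  assumes "levy_measure \<rho>"
  shows "sigma_finite_measure \<rho>"
proof
  let ?u = "\<lambda>r::'a. ennreal (min 1 (norm r ^ 2))"
  have sets: "sets \<rho> = sets borel" and null: "emeasure \<rho> {0} = 0" and fin: "integral\<^sup>N \<rho> ?u < \<infinity>"
    using assms by (auto simp: levy_measure_def)
  have space: "space \<rho> = UNIV" using sets_eq_imp_space_eq[OF sets] by simp
  define S where "S n = {r::'a. 1 \<le> ennreal (real (Suc n)) * ?u r}" for n
  have S_sets: "S n \<in> sets \<rho>" for n
    unfolding S_def sets by measurable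
  have "(\<lambda>r::'a. min 1 (norm r ^ 2)) \<in> borel_measurable \<rho>"
    unfolding measurable_cong_sets[OF sets refl] by measurable
  then have Markov: "emeasure \<rho> (S n) \<le> ennreal (real (Suc n)) * integral\<^sup>N \<rho> ?u" for n
    using nn_integral_Markov_inequality[of ?u "space \<rho>" \<rho> "ennreal (real (Suc n))"] sets.top[of \<rho>]
    by (simp add: S_def space)
  have S_finite: "emeasure \<rho> (S n) \<noteq> \<infinity>" for n
  proof -
    have "ennreal (real (Suc n)) * integral\<^sup>N \<rho> ?u < \<infinity>"
      using fin by (simp add: ennreal_mult_less_top)
    then show ?thesis using le_less_trans[OF Markov[of n]] by auto
  qed
  have cover: "r \<in> (\<Union>n. S n)" if "r \<noteq> 0" for r
  proof -
    have q: "0 < min 1 (norm r ^ 2)" using that by simp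
    obtain n where "1 / min 1 (norm r ^ 2) < real (Suc n)"
      using reals_Archimedean2 by (metis less_Suc_eq of_nat_less_iff less_trans)
    then have "1 \<le> real (Suc n) * min 1 (norm r ^ 2)"
      using q by (simp add: field_simps)
    then have "ennreal 1 \<le> ennreal (real (Suc n)) * ennreal (min 1 (norm r ^ 2))"
      by (subst ennreal_mult'[symmetric]) (simp_all add: ennreal_leI)
    then have "r \<in> S n"
      by (simp add: S_def)
    then show ?thesis by blast
  qed
  show "\<exists>A. countable A \<and> A \<subseteq> sets \<rho> \<and> \<Union> A = space \<rho> \<and> (\<forall>a\<in>A. emeasure \<rho> a \<noteq> \<infinity>)"
  proof (intro exI[of _ "insert {0} (range S)"] conjI)
    show "countable (insert {0} (range S))" by simp
    show "insert {0} (range S) \<subseteq> sets \<rho>" using S_sets sets by auto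
    show "\<Union> (insert {0} (range S)) = space \<rho>"
      unfolding space by (rule sym, rule UNIV_eq_I) (use cover in blast)
    show "\<forall>a\<in>insert {0} (range S). emeasure \<rho> a \<noteq> \<infinity>" using null S_finite by auto
  qed
qed

lemma borel_measurable_cis_inner: "(\<lambda>x. cis (m \<bullet> x)) \<in> borel_measurable borel"
  by (intro borel_measurable_continuous_onI continuous_intros)

lemma continuous_on_charf:
  assumes "prob_space M" "Z \<in> borel_measurable M"
  shows "continuous_on UNIV (charf M Z)"
proof (intro continuous_at_imp_continuous_on ballI)
  interpret prob_space M by fact
  fix z
  show "isCont (charf M Z) z"
  proof (rule continuous_at_sequentiallyI)
    fix S assume "S \<longlonglongrightarrow> z"
    have "(\<lambda>\<omega>. cis (s \<bullet> Z \<omega>)) \<in> borel_measurable M" for s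
      using measurable_compose[OF assms(2) borel_measurable_cis_inner] .
    then show "(\<lambda>n. charf M Z (S n)) \<longlonglongrightarrow> charf M Z z"
      unfolding charf_def using \<open>S \<longlonglongrightarrow> z\<close>
      by (intro integral_dominated_convergence[where w="\<lambda>_. 1"] AE_I2 tendsto_intros) simp_all
  qed
qed

lemma charf2_eq_charf_pair: "charf2 M X Y s t = charf M (\<lambda>\<omega>. (X \<omega>, Y \<omega>)) (s, t)"
  by (simp add: charf2_def charf_def)

lemma integral_cis_distr:
  assumes "Z \<in> borel_measurable M"
  shows "(CLINT x|distr M borel Z. cis (m \<bullet> x)) = charf M Z m"
  unfolding charf_def using assms borel_measurable_cis_inner by (rule integral_distr)

lemma integral_cis_pair_measure:
  fixes P :: "'a::euclidean_space measure" and Q :: "'b::euclidean_space measure"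
  assumes "pair_prob_space P Q" "sets P = sets borel" "sets Q = sets borel"
  shows "(CLINT z|P \<Otimes>\<^sub>M Q. cis ((s, t) \<bullet> z)) = (CLINT x|P. cis (s \<bullet> x)) * (CLINT y|Q. cis (t \<bullet> y))"
proof -
  interpret pair_prob_space P Q by fact
  have "sets (P \<Otimes>\<^sub>M Q) = sets (borel :: ('a \<times> 'b) measure)"
    using assms(2,3) by (subst borel_prod[symmetric], intro sets_pair_measure_cong)
  then have "(\<lambda>z. cis ((s, t) \<bullet> z)) \<in> borel_measurable (P \<Otimes>\<^sub>M Q)"
    using measurable_cong_sets[of "P \<Otimes>\<^sub>M Q" borel borel borel] borel_measurable_cis_inner by blast
  then have "integrable (P \<Otimes>\<^sub>M Q) (\<lambda>z. cis ((s, t) \<bullet> z))"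
    by (rule integrable_const_bound[where B=1, rotated]) simp
  then have "(CLINT z|P \<Otimes>\<^sub>M Q. cis ((s, t) \<bullet> z)) = (CLINT x|P. (CLINT y|Q. cis ((s, t) \<bullet> (x, y))))"
    by (rule integral_fst'[symmetric])
  also have "\<dots> = (CLINT x|P. cis (s \<bullet> x) * (CLINT y|Q. cis (t \<bullet> y)))"
    by (simp add: cis_mult[symmetric])
  finally show ?thesis by simp
qed

lemma (in prob_space) indep_set_iff_distr_pair:
  fixes X :: "'a \<Rightarrow> 'b::euclidean_space" and Y :: "'a \<Rightarrow> 'c::euclidean_space"
  assumes X: "X \<in> borel_measurable M" and Y: "Y \<in> borel_measurable M"
  shows "indep_set {X -` A \<inter> space M | A. A \<in> sets borel} {Y -` B \<inter> space M | B. B \<in> sets borel} \<longleftrightarrow>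
    distr M borel X \<Otimes>\<^sub>M distr M borel Y = distr M borel (\<lambda>\<omega>. (X \<omega>, Y \<omega>))"
proof -
  let ?J = "distr M borel (\<lambda>\<omega>. (X \<omega>, Y \<omega>))" and ?PX = "distr M borel X" and ?PY = "distr M borel Y"
  have XY: "(\<lambda>\<omega>. (X \<omega>, Y \<omega>)) \<in> borel_measurable M"
    using X Y by measurable
  interpret PX: prob_space ?PX using X by (rule prob_space_distr)
  interpret PY: prob_space ?PY using Y by (rule prob_space_distr)
  interpret I: pair_prob_space ?PX ?PY by unfold_locales
  have rectangle: "emeasure ?J (A \<times> B) = emeasure M (X -` A \<inter> space M \<inter> (Y -` B \<inter> space M))"
    if "A \<in> sets borel" "B \<in> sets borel" for A B
  proof -
    have "A \<times> B \<in> sets (borel :: ('b \<times> 'c) measure)"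
      using that by (simp add: borel_prod[symmetric])
    then have "emeasure ?J (A \<times> B) = emeasure M ((\<lambda>\<omega>. (X \<omega>, Y \<omega>)) -` (A \<times> B) \<inter> space M)"
      by (rule emeasure_distr[OF XY])
    also have "(\<lambda>\<omega>. (X \<omega>, Y \<omega>)) -` (A \<times> B) \<inter> space M = X -` A \<inter> space M \<inter> (Y -` B \<inter> space M)"
      by auto
    finally show ?thesis .
  qed
  have product_eq_iff: "prob (a \<inter> b) = prob a * prob b \<longleftrightarrow>
      emeasure M (a \<inter> b) = emeasure M a * emeasure M b" for a b
    by (simp add: emeasure_eq_measure ennreal_mult''[symmetric])
  have events: "{X -` A \<inter> space M | A. A \<in> sets borel} \<subseteq> events"
    "{Y -` B \<inter> space M | B. B \<in> sets borel} \<subseteq> events"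
    using X Y by (auto intro: measurable_sets)
  have "indep_set {X -` A \<inter> space M | A. A \<in> sets borel} {Y -` B \<inter> space M | B. B \<in> sets borel} \<longleftrightarrow>
      (\<forall>A\<in>sets borel. \<forall>B\<in>sets borel. emeasure M (X -` A \<inter> space M \<inter> (Y -` B \<inter> space M)) =
        emeasure M (X -` A \<inter> space M) * emeasure M (Y -` B \<inter> space M))"
    unfolding indep_sets2_eq product_eq_iff using events by blast
  also have "\<dots> \<longleftrightarrow>
      (\<forall>A\<in>sets borel. \<forall>B\<in>sets borel. emeasure ?PX A * emeasure ?PY B = emeasure ?J (A \<times> B))"
    by (intro ball_cong refl) (simp add: rectangle emeasure_distr X Y eq_commute)
  also have "\<dots> \<longleftrightarrow> ?PX \<Otimes>\<^sub>M ?PY = ?J"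
  proof
    assume "\<forall>A\<in>sets borel. \<forall>B\<in>sets borel. emeasure ?PX A * emeasure ?PY B = emeasure ?J (A \<times> B)"
    moreover have "sets (?PX \<Otimes>\<^sub>M ?PY) = sets ?J"
      by (subst sets_distr, subst borel_prod[symmetric], intro sets_pair_measure_cong) simp_all
    ultimately show "?PX \<Otimes>\<^sub>M ?PY = ?J"
      by (intro pair_measure_eqI PX.sigma_finite_measure_axioms PY.sigma_finite_measure_axioms) simp_all
  next
    assume eq: "?PX \<Otimes>\<^sub>M ?PY = ?J"
    show "\<forall>A\<in>sets borel. \<forall>B\<in>sets borel. emeasure ?PX A * emeasure ?PY B = emeasure ?J (A \<times> B)"
    proof (intro ballI)
      fix A :: "'b set" and B :: "'c set" assume "A \<in> sets borel" "B \<in> sets borel"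
      then have "emeasure (?PX \<Otimes>\<^sub>M ?PY) (A \<times> B) = emeasure ?PX A * emeasure ?PY B"
        by (intro PY.emeasure_pair_measure_Times) simp_all
      then show "emeasure ?PX A * emeasure ?PY B = emeasure ?J (A \<times> B)"
        unfolding eq by simp
    qed
  qed
  finally show ?thesis .
qed

lemma (in prob_space) distr_pair_eq_iff_charf2_eq:
  fixes X :: "'a \<Rightarrow> 'b::euclidean_space" and Y :: "'a \<Rightarrow> 'c::euclidean_space"
  assumes X: "X \<in> borel_measurable M" and Y: "Y \<in> borel_measurable M"
  shows "distr M borel X \<Otimes>\<^sub>M distr M borel Y = distr M borel (\<lambda>\<omega>. (X \<omega>, Y \<omega>)) \<longleftrightarrow>
    (\<forall>s t. charf2 M X Y s t = charf M X s * charf M Y t)"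
proof -
  let ?J = "distr M borel (\<lambda>\<omega>. (X \<omega>, Y \<omega>))" and ?I = "distr M borel X \<Otimes>\<^sub>M distr M borel Y"
  have XY: "(\<lambda>\<omega>. (X \<omega>, Y \<omega>)) \<in> borel_measurable M"
    using X Y by measurable
  interpret PX: prob_space "distr M borel X" using X by (rule prob_space_distr)
  interpret PY: prob_space "distr M borel Y" using Y by (rule prob_space_distr)
  interpret I: pair_prob_space "distr M borel X" "distr M borel Y" by unfold_locales
  have char_J: "(CLINT z|?J. cis ((s, t) \<bullet> z)) = charf2 M X Y s t" for s t
    using integral_cis_distr[OF XY] by (simp add: charf2_eq_charf_pair)
  have char_I: "(CLINT z|?I. cis ((s, t) \<bullet> z)) = charf M X s * charf M Y t" for s t
    using integral_cis_pair_measure[OF I.pair_prob_space_axioms] by (simp add: integral_cis_distr X Y)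
  show ?thesis
  proof
    assume "?I = ?J"
    then show "\<forall>s t. charf2 M X Y s t = charf M X s * charf M Y t"
      using char_I char_J by simp
  next
    assume factorizes: "\<forall>s t. charf2 M X Y s t = charf M X s * charf M Y t"
    have "sets ?I = sets (borel :: ('b \<times> 'c) measure)"
      by (subst borel_prod[symmetric], intro sets_pair_measure_cong) simp_all
    moreover have "(CLINT z|?I. cis (m \<bullet> z)) = (CLINT z|?J. cis (m \<bullet> z))" for m :: "'b \<times> 'c"
      using char_I[of "fst m" "snd m"] char_J[of "fst m" "snd m"] factorizes by simp
    ultimately have "same_char ?I ?J"
      by (intro same_char.intro same_char_axioms.intro I.P.prob_space_axioms prob_space_distr XY) simp_all
    then show "?I = ?J" by (rule same_char.measure_eq)
  qed
qed

lemma AE_pair_continuous_zero_off_axes: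
  fixes f :: "'a::euclidean_space \<times> 'b::euclidean_space \<Rightarrow> 'c::real_normed_vector"
  assumes sets: "sets \<mu> = sets borel" "sets \<nu> = sets borel"
    and full: "full_support \<mu>" "full_support \<nu>" and "sigma_finite_measure \<nu>"
    and f: "continuous_on UNIV f" and AE: "AE z in \<mu> \<Otimes>\<^sub>M \<nu>. f z = 0"
    and "s \<noteq> 0" "t \<noteq> 0"
  shows "f (s, t) = 0"
proof (rule ccontr)
  interpret \<nu>: sigma_finite_measure \<nu> by fact
  let ?W = "f -` (- {0})"
  assume "f (s, t) \<noteq> 0"
  moreover have "open ?W" using f by (intro open_vimage) auto
  ultimately obtain A B where AB: "open A" "open B" "(s, t) \<in> A \<times> B" "A \<times> B \<subseteq> ?W"
    by (auto elim: open_prod_elim)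
  let ?A = "A \<inter> ball s (norm s)" and ?B = "B \<inter> ball t (norm t)"
  have "open ?A" "s \<in> ?A" "0 \<notin> ?A" "open ?B" "t \<in> ?B" "0 \<notin> ?B"
    using AB \<open>s \<noteq> 0\<close> \<open>t \<noteq> 0\<close> by auto
  then have "0 < emeasure \<mu> ?A" "0 < emeasure \<nu> ?B"
    using full unfolding full_support_def by blast+
  moreover have "emeasure (\<mu> \<Otimes>\<^sub>M \<nu>) (?A \<times> ?B) = emeasure \<mu> ?A * emeasure \<nu> ?B"
    using sets AB by (intro \<nu>.emeasure_pair_measure_Times) auto
  moreover have "sets (\<mu> \<Otimes>\<^sub>M \<nu>) = sets (borel :: ('a \<times> 'b) measure)"
    using sets by (subst borel_prod[symmetric], intro sets_pair_measure_cong)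
  then have "emeasure (\<mu> \<Otimes>\<^sub>M \<nu>) ?W = 0"
    using AE f \<open>open ?W\<close> sets_eq_imp_space_eq[OF \<open>sets (\<mu> \<Otimes>\<^sub>M \<nu>) = _\<close>]
    by (subst AE_iff_measurable[symmetric]) auto
  moreover have "emeasure (\<mu> \<Otimes>\<^sub>M \<nu>) (?A \<times> ?B) \<le> emeasure (\<mu> \<Otimes>\<^sub>M \<nu>) ?W"
    using AB \<open>open ?W\<close> \<open>sets (\<mu> \<Otimes>\<^sub>M \<nu>) = _\<close> by (intro emeasure_mono) auto
  ultimately show False
    by (metis le_zero_eq mult_eq_0_iff not_gr_zero)
qed

lemma dcov2_eq_0_iff:
  fixes \<mu> :: "'a::euclidean_space measure" and \<nu> :: "'b::euclidean_space measure"
  assumes "levy_measure \<mu>" "full_support \<mu>" "levy_measure \<nu>" "full_support \<nu>"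
    and M: "prob_space M" and X: "X \<in> borel_measurable M" and Y: "Y \<in> borel_measurable M"
  shows "dcov2 \<mu> \<nu> M X Y = 0 \<longleftrightarrow> (\<forall>s t. charf2 M X Y s t = charf M X s * charf M Y t)"
proof -
  interpret prob_space M by fact
  define D where "D z = charf2 M X Y (fst z) (snd z) - charf M X (fst z) * charf M Y (snd z)" for z
  have sets: "sets \<mu> = sets borel" "sets \<nu> = sets borel"
    using assms(1,3) by (auto simp: levy_measure_def)
  have "continuous_on UNIV (charf M (\<lambda>\<omega>. (X \<omega>, Y \<omega>)))"
    using X Y by (intro continuous_on_charf M) measurable
  moreover have "continuous_on UNIV (\<lambda>z. charf M X (fst z))" "continuous_on UNIV (\<lambda>z. charf M Y (snd z))"
    using continuous_on_compose2[OF continuous_on_charf[OF M X] continuous_on_fst[OF continuous_on_id]]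
      continuous_on_compose2[OF continuous_on_charf[OF M Y] continuous_on_snd[OF continuous_on_id]]
    by simp_all
  moreover have "D = (\<lambda>z. charf M (\<lambda>\<omega>. (X \<omega>, Y \<omega>)) z - charf M X (fst z) * charf M Y (snd z))"
    by (simp add: fun_eq_iff D_def charf2_eq_charf_pair)
  ultimately have D_cont: "continuous_on UNIV D"
    by (simp only:) (intro continuous_intros)
  have "(\<lambda>z. ennreal ((cmod (D z))\<^sup>2)) \<in> borel_measurable (\<mu> \<Otimes>\<^sub>M \<nu>)"
    using borel_measurable_continuous_onI[OF D_cont]
    by (simp add: measurable_cong_sets[OF sets_pair_measure_cong[OF sets] refl] borel_prod)
  then have "dcov2 \<mu> \<nu> M X Y = 0 \<longleftrightarrow> (AE z in \<mu> \<Otimes>\<^sub>M \<nu>. D z = 0)"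
    unfolding dcov2_def D_def[symmetric] by (simp add: nn_integral_0_iff_AE)
  also have "\<dots> \<longleftrightarrow> (\<forall>s t. D (s, t) = 0)"
  proof
    assume AE: "AE z in \<mu> \<Otimes>\<^sub>M \<nu>. D z = 0"
    show "\<forall>s t. D (s, t) = 0"
    proof (intro allI)
      fix s t
      show "D (s, t) = 0"
      proof (cases "s = 0 \<or> t = 0")
        case True
        then show ?thesis by (auto simp: D_def charf_def charf2_def prob_space)
      next
        case False
        then show ?thesis
          using AE_pair_continuous_zero_off_axes[OF sets assms(2,4)
              levy_measure_sigma_finite[OF assms(3)] D_cont AE] by simp
      qed
    qed
  qed (simp add: split_paired_all)
  finally show ?thesis by (simp add: D_def)
qed

theorem lemma3p2:
  fixes \<mu> :: "'a::euclidean_space measure" and \<nu> :: "'b::euclidean_space measure"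
    and M :: "'w measure" and X :: "'w \<Rightarrow> 'a" and Y :: "'w \<Rightarrow> 'b"
  assumes "levy_measure \<mu>" "symmetric_measure \<mu>" "full_support \<mu>"
    and "levy_measure \<nu>" "symmetric_measure \<nu>" "full_support \<nu>"
    and "prob_space M"
    and "X \<in> borel_measurable M" "Y \<in> borel_measurable M"
  shows "prob_space.indep_set M {X -` A \<inter> space M | A. A \<in> sets borel}
      {Y -` B \<inter> space M | B. B \<in> sets borel} \<longleftrightarrow> dcov2 \<mu> \<nu> M X Y = 0"
proof -
  interpret prob_space M by fact
  have "indep_set {X -` A \<inter> space M | A. A \<in> sets borel} {Y -` B \<inter> space M | B. B \<in> sets borel} \<longleftrightarrow>
      distr M borel X \<Otimes>\<^sub>M distr M borel Y = distr M borel (\<lambda>\<omega>. (X \<omega>, Y \<omega>))"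
    using assms(8,9) by (rule indep_set_iff_distr_pair)
  also have "\<dots> \<longleftrightarrow> (\<forall>s t. charf2 M X Y s t = charf M X s * charf M Y t)"
    using assms(8,9) by (rule distr_pair_eq_iff_charf2_eq)
  also have "\<dots> \<longleftrightarrow> dcov2 \<mu> \<nu> M X Y = 0"
    using assms(1,3,4,6-9) by (simp add: dcov2_eq_0_iff)
  finally show ?thesis .
qed

end
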